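(* Let $\ell\ge1$ be an integer. The operator $S^\ell$ maps $(P_\ell)^{2\ell+1}$ into itself; let $S_\ell$ denote its restriction to this finite-dimensional space. Then the spectral radius satisfies $\rho(S_\ell)\le1$. Moreover, if $\rho(S_\ell)=1$, then there exist $c\in\mathbb{C}$ with $|c|=1$ and a nonzero $A\in(P_\ell)^{2\ell+1}$ such that $T^\ell(\omega)A(\omega)=c\,A(\omega^2)$ identically in $\omega$.
   Context: For $\ell\in\{\tfrac12,1,\tfrac32,\dots\}$ and $m,n\in\{-\ell,\dots,\ell\}$ let $\tau^\ell_{m,n}=\sqrt{\frac{(\ell-m)!(\ell+m)!}{(\ell-n)!(\ell+n)!}}\,\frac{i^{2\ell}}{2^\ell}\cdot[\text{coefficient of }z^{\ell-m}\text{ in }(z+1)^{\ell-n}(z-1)^{\ell+n}]$, and $\tau^\ell=(\tau^\ell_{m,n})$ (a unitary $(2\ell+1)\times(2\ell+1)$ matrix, indices $-\ell,\dots,\ell$). For integer $\ell\ge1$ let $T^\ell(\omega)=\tau^\ell\,\mathrm{diag}(\omega^{-\ell},\omega^{-\ell+1},\dots,\omega^{\ell})$. Let $P$ be the space of complex Laurent polynomials in $\omega$, and $P_\ell=\mathrm{span}_{\mathbb{C}}\{\omega^{-(\ell-1)},\dots,\omega^{\ell-1}\}$. Define $S^\ell:P^{2\ell+1}\to P^{2\ell+1}$ by: if $T^\ell(\omega)A=\big[\sum_j\beta_{h}(j)\omega^j\big]_{h=-\ell}^{\ell}$, then $S^\ell A=\big[\sum_j\beta_h(2j)\omega^j\big]_{h=-\ell}^{\ell}$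 (keep even-exponent terms and halve the exponents). *)

theory Defs
  imports Complex_Main "HOL-Computational_Algebra.Polynomial"
begin

text \<open>Conventions: the integer l (ell) is a nat; indices m,n,h range over the int
interval {-l..l}. A complex Laurent polynomial is represented by its coefficient
function int => complex (finite support). A vector A in P^(2l+1) is represented by
A :: int => int => complex, where A h j is the coefficient of w^j in component h;
components with h outside {-l..l} are taken to be 0.\<close>

definition tau :: "nat \<Rightarrow> int \<Rightarrow> int \<Rightarrow> complex" where
  "tau l m n =
     complex_of_real (sqrt ((fact (nat (int l - m)) * fact (nat (int l + m)))
                          / (fact (nat (int l - n)) * fact (nat (int l + n)))))
     * (\<i> ^ (2 * l) / 2 ^ l)
     * coeff ([:1, 1:] ^ nat (int l - n) * [:-1, 1:] ^ nat (int l + n)) (nat (int l - m))"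

text \<open>Coefficient beta_h(j) of w^j in component h of T^l(w) A(w), where
T^l(w) = tau^l diag(w^-l, ..., w^l).\<close>
definition TA_coeff :: "nat \<Rightarrow> (int \<Rightarrow> int \<Rightarrow> complex) \<Rightarrow> int \<Rightarrow> int \<Rightarrow> complex" where
  "TA_coeff l A h j = (\<Sum>n\<in>{-int l..int l}. tau l h n * A n (j - n))"

definition S_op :: "nat \<Rightarrow> (int \<Rightarrow> int \<Rightarrow> complex) \<Rightarrow> (int \<Rightarrow> int \<Rightarrow> complex)" where
  "S_op l A = (\<lambda>h j. if h \<in> {-int l..int l} then TA_coeff l A h (2 * j) else 0)"

definition Pl_vec :: "nat \<Rightarrow> (int \<Rightarrow> int \<Rightarrow> complex) set" where
  "Pl_vec l = {A. \<forall>h j. A h j \<noteq> 0 \<longrightarrow>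
                   h \<in> {-int l..int l} \<and> - (int l - 1) \<le> j \<and> j \<le> int l - 1}"

definition S_eigenvalues :: "nat \<Rightarrow> complex set" where
  "S_eigenvalues l = {ev. \<exists>A\<in>Pl_vec l. A \<noteq> (\<lambda>h j. 0) \<and> S_op l A = (\<lambda>h j. ev * A h j)}"

definition rho_S :: "nat \<Rightarrow> real" where
  "rho_S l = Sup (cmod ` S_eigenvalues l)"

definition leval :: "(int \<Rightarrow> complex) \<Rightarrow> complex \<Rightarrow> complex" where
  "leval f w = (\<Sum>j\<in>{j. f j \<noteq> 0}. f j * w powi j)"

definition T_eval :: "nat \<Rightarrow> (int \<Rightarrow> int \<Rightarrow> complex) \<Rightarrow> complex \<Rightarrow> int \<Rightarrow> complex" where
  "T_eval l A w h = (\<Sum>n\<in>{-int l..int l}. tau l h n * w powi n * leval (A n) w)"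

end

theory Submission
  imports Defs "Jordan_Normal_Form.Spectral_Radius"
begin

text \<open>Up to the diagonal scaling by \<open>sqrt ((l - m)! (l + m)!)\<close>, \<open>\<tau>\<^sup>l\<close> is the Krawtchouk
matrix \<open>K\<close> of order \<open>N = 2l\<close>, which is symmetric with respect to the weights \<open>a! (N - a)!\<close>
and satisfies \<open>K\<^sup>2 = 2\<^sup>N I\<close>; hence \<open>\<tau>\<^sup>l\<close> is real orthogonal. Multiplication by
\<open>T\<^sup>l(\<omega>)\<close> therefore preserves the sum of squared moduli of the coefficients, and
\<open>S\<^sup>l A\<close>, which keeps only the even coefficients of \<open>T\<^sup>l A\<close>, satisfies
\<open>\<parallel>A\<parallel>\<^sup>2 = \<parallel>S\<^sup>l A\<parallel>\<^sup>2 + \<parallel>odd part of T\<^sup>l A\<parallel>\<^sup>2\<close>. For an eigenvector this gives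
\<open>(1 - |c|\<^sup>2) \<parallel>A\<parallel>\<^sup>2 = \<parallel>odd part\<parallel>\<^sup>2\<close>: so \<open>|c| \<le> 1\<close>, and if \<open>|c| = 1\<close> the odd part
vanishes, which is the functional equation \<open>T\<^sup>l(\<omega>) A(\<omega>) = c A(\<omega>\<^sup>2)\<close>. Representing
\<open>S\<^sub>l\<close> by a complex square matrix shows that its spectrum is finite and nonempty, so
\<open>\<rho>(S\<^sub>l)\<close> is attained.\<close>

lemma coeff_monic_linear_poly_power:
  "coeff ([:a, 1:] ^ n) i = (of_nat (n choose i) * a ^ (n - i) :: 'a::comm_semiring_1)"
proof (cases "i \<le> n")
  case True
  then show ?thesis by (simp add: coeff_linear_poly_power)
next
  case False
  moreover have "degree ([:a, 1:] ^ n) \<le> n"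
    using degree_linear_power[of a n] by simp
  ultimately show ?thesis by (simp add: coeff_eq_0 binomial_eq_0)
qed

definition krawtchouk :: "nat \<Rightarrow> nat \<Rightarrow> nat \<Rightarrow> 'a::comm_ring_1" where
  "krawtchouk N a c = coeff ([:1, 1:] ^ c * [:-1, 1:] ^ (N - c)) a"

lemma krawtchouk_eq_sum:
  "krawtchouk N a c = (\<Sum>k\<le>min a c.
     of_nat (c choose k) * of_nat ((N - c) choose (a - k)) * (-1) ^ (N - c - (a - k)))"
proof -
  have "krawtchouk N a c = (\<Sum>k\<le>a.
     of_nat (c choose k) * of_nat ((N - c) choose (a - k)) * (-1) ^ (N - c - (a - k)))"
    unfolding krawtchouk_def coeff_mult coeff_monic_linear_poly_power by (simp add: mult.assoc)
  also have "\<dots> = (\<Sum>k\<le>min a c.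
     of_nat (c choose k) * of_nat ((N - c) choose (a - k)) * (-1) ^ (N - c - (a - k)))"
    by (intro sum.mono_neutral_right ballI) (auto simp: binomial_eq_0)
  finally show ?thesis .
qed

lemma cnj_krawtchouk [simp]: "cnj (krawtchouk N a c) = krawtchouk N a c"
  by (simp add: krawtchouk_eq_sum)

lemma krawtchouk_symmetric:
  assumes "a \<le> N" "c \<le> N"
  shows "fact a * fact (N - a) * krawtchouk N a c
       = (fact c * fact (N - c) * krawtchouk N c a :: 'a::field_char_0)"
proof -
  have "fact a * fact (N - a) * of_nat (c choose k) * of_nat ((N - c) choose (a - k))
      = (fact c * fact (N - c) * of_nat (a choose k) * of_nat ((N - a) choose (c - k)) :: 'a)"
    if k: "k \<le> min a c" for k
  proof (cases "a - k \<le> N - c")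
    case True
    then have "c - k \<le> N - a" "N - c - (a - k) = N - a - (c - k)"
      using assms k by auto
    with True k show ?thesis
      by (simp add: binomial_fact field_simps)
  next
    case False
    then have "\<not> c - k \<le> N - a" using assms k by auto
    with False show ?thesis by (simp add: binomial_eq_0)
  qed
  moreover have "N - c - (a - k) = N - a - (c - k)" if "k \<le> min a c" for k
    using assms that by auto
  ultimately show ?thesis
    unfolding krawtchouk_eq_sum sum_distrib_left
    by (intro sum.cong) (auto simp: min.commute mult_ac)
qed

lemma poly_eq_sum_coeff:
  fixes p :: "'a::comm_semiring_1 poly"
  assumes "degree p \<le> N"
  shows "poly p x = (\<Sum>i\<le>N. coeff p i * x ^ i)"
  unfolding poly_altdef using assms
  by (intro sum.mono_neutral_left) (auto simp: coeff_eq_0)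

lemma degree_krawtchouk_poly:
  assumes "e \<le> N"
  shows "degree ([:1, 1:] ^ e * [:-1, 1:] ^ (N - e) :: 'a::idom poly) \<le> N"
proof -
  have "degree ([:1, 1:] ^ e * [:-1, 1:] ^ (N - e) :: 'a poly) \<le> e + (N - e)"
    using degree_mult_le[of "[:1, 1:] ^ e" "[:-1, 1:] ^ (N - e) :: 'a poly"]
    by (simp add: degree_linear_power)
  with assms show ?thesis by simp
qed

lemma krawtchouk_poly_identity:
  assumes e: "e \<le> N"
  shows "(\<Sum>a\<le>N. Polynomial.smult (krawtchouk N a e) ([:1, 1:] ^ a * [:-1, 1:] ^ (N - a)))
       = monom (2 ^ N :: 'a::field_char_0) e"
proof -
  define P :: "'a poly" where
    "P = (\<Sum>a\<le>N. Polynomial.smult (krawtchouk N a e) ([:1, 1:] ^ a * [:-1, 1:] ^ (N - a))) - monom (2 ^ N) e"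
  have "poly P z = 0" if z: "z \<noteq> 1" for z
  proof -
    txt \<open>Evaluate the polynomial defining column \<open>e\<close> at \<open>w = (z + 1) / (z - 1)\<close>; since
      \<open>w + 1 = 2z / (z - 1)\<close> and \<open>w - 1 = 2 / (z - 1)\<close>, clearing denominators gives \<open>2\<^sup>N z\<^sup>e\<close>.\<close>
    define u where "u = z - 1"
    define w where "w = (z + 1) / u"
    have u: "u \<noteq> 0" using z by (simp add: u_def)
    let ?Q = "[:1, 1:] ^ e * [:-1, 1:] ^ (N - e) :: 'a poly"
    have "u ^ N * poly ?Q w = (\<Sum>a\<le>N. krawtchouk N a e * (u ^ N * w ^ a))"
      unfolding poly_eq_sum_coeff[OF degree_krawtchouk_poly[OF e]] krawtchouk_def
      by (simp add: sum_distrib_left mult_ac)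
    also have "\<dots> = (\<Sum>a\<le>N. krawtchouk N a e * ((z + 1) ^ a * u ^ (N - a)))"
      using u by (intro sum.cong) (simp_all add: w_def power_divide power_diff)
    finally have lhs: "u ^ N * poly ?Q w = (\<Sum>a\<le>N. krawtchouk N a e * ((z + 1) ^ a * u ^ (N - a)))" .
    have "w + 1 = 2 * z / u" "w - 1 = 2 / u"
      using u by (simp_all add: w_def u_def field_simps)
    then have "u ^ N * poly ?Q w = u ^ e * u ^ (N - e) * ((2 * z / u) ^ e * (2 / u) ^ (N - e))"
      using e by (simp add: algebra_simps flip: power_add)
    also have "\<dots> = 2 ^ N * z ^ e"
      using u e by (simp add: power_divide power_mult_distrib flip: power_add)
    finally show ?thesis
      using lhs by (simp add: P_def poly_sum poly_monom u_def algebra_simps)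
  qed
  then have "UNIV - {1} \<subseteq> {z. poly P z = 0}" by auto
  moreover have "infinite (UNIV - {1 :: 'a})"
    by (simp add: infinite_UNIV_char_0)
  ultimately have "P = 0"
    using poly_roots_finite finite_subset by blast
  then show ?thesis by (simp add: P_def)
qed

lemma krawtchouk_squared:
  assumes "e \<le> N"
  shows "(\<Sum>a\<le>N. krawtchouk N c a * krawtchouk N a e) = (if c = e then 2 ^ N else 0 :: 'a::field_char_0)"
proof -
  have "coeff (\<Sum>a\<le>N. Polynomial.smult (krawtchouk N a e) ([:1, 1:] ^ a * [:-1, 1:] ^ (N - a))) c
      = coeff (monom (2 ^ N :: 'a) e) c"
    by (simp only: krawtchouk_poly_identity[OF assms])
  then show ?thesis
    by (simp add: coeff_sum krawtchouk_def[symmetric] mult.commute)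
qed

abbreviation comp_range :: "nat \<Rightarrow> int set" where
  "comp_range l \<equiv> {-int l..int l}"

abbreviation exp_range :: "nat \<Rightarrow> int set" where
  "exp_range l \<equiv> {-(int l - 1)..int l - 1}"

abbreviation TA_exp_range :: "nat \<Rightarrow> int set" where
  "TA_exp_range l \<equiv> {-(2 * int l - 1)..2 * int l - 1}"

lemma sum_centered_range_reindex:
  "(\<Sum>m\<in>comp_range l. g m) = (\<Sum>a\<le>2 * l. g (int l - int a))"
  by (rule sum.reindex_bij_witness[where i = "\<lambda>a. int l - int a" and j = "\<lambda>m. nat (int l - m)"])
    auto

lemma centered_rangeE:
  assumes "m \<in> comp_range l"
  obtains a where "a \<le> 2 * l" "m = int l - int a"
  using assms by (intro that[of "nat (int l - m)"]) auto

lemma tau_eq_krawtchouk: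
  assumes "a \<le> 2 * l" "c \<le> 2 * l"
  shows "tau l (int l - int a) (int l - int c)
       = of_real (sqrt (fact a * fact (2 * l - a))) / of_real (sqrt (fact c * fact (2 * l - c)))
         * ((-1) ^ l / 2 ^ l) * krawtchouk (2 * l) a c"
proof -
  have "nat (int l + (int l - int a)) = 2 * l - a" "nat (int l + (int l - int c)) = 2 * l - c"
    using assms by auto
  moreover have "\<i> ^ (2 * l) = (-1) ^ l" by (simp add: power_mult)
  ultimately show ?thesis
    by (simp add: tau_def krawtchouk_def real_sqrt_divide)
qed

lemma tau_orthonormal:
  assumes "n \<in> comp_range l" "n' \<in> comp_range l"
  shows "(\<Sum>m\<in>comp_range l. cnj (tau l m n) * tau l m n') = (if n = n' then 1 else 0)"
proof -
  define N where "N = 2 * l"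
  obtain c c' where c: "c \<le> N" "n = int l - int c" and c': "c' \<le> N" "n' = int l - int c'"
    using assms by (elim centered_rangeE) (simp add: N_def)
  define w :: "nat \<Rightarrow> complex" where "w a = of_real (sqrt (fact a * fact (N - a)))" for a
  have w_sq: "w a * w a = fact a * fact (N - a)" for a
    by (simp only: w_def flip: of_real_mult) simp
  have w_nz: "w a \<noteq> 0" and cnj_w: "cnj (w a) = w a" for a
    by (simp_all add: w_def)
  define s :: complex where "s = (-1) ^ l / 2 ^ l"
  have s_sq: "s * s = 1 / 2 ^ N"
    by (simp add: s_def N_def power_mult_distrib flip: power_add mult_2 power_mult)
  have cnj_s: "cnj s = s"
    by (simp add: s_def)
  have tau_w: "tau l (int l - int a) (int l - int b) = w a / w b * s * krawtchouk N a b"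
    if "a \<le> N" "b \<le> N" for a b
    using that by (simp add: tau_eq_krawtchouk w_def s_def N_def)
  have "(\<Sum>m\<in>comp_range l. cnj (tau l m n) * tau l m n')
      = (\<Sum>a\<le>N. s * s / (w c * w c') * (w a * w a * krawtchouk N a c) * krawtchouk N a c')"
    unfolding sum_centered_range_reindex N_def[symmetric] using c c' assms
    by (intro sum.cong) (auto simp: tau_w cnj_w cnj_s N_def)
  also have "\<dots> = (\<Sum>a\<le>N. s * s / (w c * w c') * (w c * w c * krawtchouk N c a) * krawtchouk N a c')"
  proof (intro sum.cong refl)
    fix a assume "a \<in> {..N}"
    then have "w a * w a * krawtchouk N a c = w c * w c * krawtchouk N c a"
      using krawtchouk_symmetric[of a N c] c by (simp add: w_sq)
    then show "s * s / (w c * w c') * (w a * w a * krawtchouk N a c) * krawtchouk N a c'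
             = s * s / (w c * w c') * (w c * w c * krawtchouk N c a) * krawtchouk N a c'"
      by simp
  qed
  also have "\<dots> = s * s / (w c * w c') * w c * w c * (\<Sum>a\<le>N. krawtchouk N c a * krawtchouk N a c')"
    by (simp add: sum_distrib_left mult_ac)
  also have "\<dots> = (if n = n' then 1 else 0)"
    using c c' w_nz by (auto simp: krawtchouk_squared s_sq)
  finally show ?thesis .
qed

lemma sum_norm_square_unitary:
  fixes U :: "'i \<Rightarrow> 'i \<Rightarrow> complex"
  assumes "finite I"
    and unitary: "\<And>n n'. n \<in> I \<Longrightarrow> n' \<in> I \<Longrightarrow>
                    (\<Sum>m\<in>I. cnj (U m n) * U m n') = (if n = n' then 1 else 0)"
  shows "(\<Sum>m\<in>I. (cmod (\<Sum>n\<in>I. U m n * x n))\<^sup>2) = (\<Sum>n\<in>I. (cmod (x n))\<^sup>2)"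
proof -
  have "complex_of_real (\<Sum>m\<in>I. (cmod (\<Sum>n\<in>I. U m n * x n))\<^sup>2)
      = (\<Sum>m\<in>I. \<Sum>n\<in>I. \<Sum>n'\<in>I. x n * cnj (x n') * (U m n * cnj (U m n')))"
    unfolding of_real_sum complex_norm_square by (simp add: sum_product mult_ac)
  also have "\<dots> = (\<Sum>n\<in>I. \<Sum>n'\<in>I. \<Sum>m\<in>I. x n * cnj (x n') * (U m n * cnj (U m n')))"
    by (subst sum.swap) (rule sum.cong[OF refl], rule sum.swap)
  also have "\<dots> = (\<Sum>n\<in>I. \<Sum>n'\<in>I. x n * cnj (x n') * (\<Sum>m\<in>I. U m n * cnj (U m n')))"
    by (simp only: sum_distrib_left)
  also have "\<dots> = (\<Sum>n\<in>I. x n * cnj (x n))"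
  proof (intro sum.cong refl)
    fix n assume n: "n \<in> I"
    have "(\<Sum>m\<in>I. U m n * cnj (U m n')) = (if n = n' then 1 else 0)" if "n' \<in> I" for n'
      using arg_cong[OF unitary[OF n that], of cnj] by simp
    then have "(\<Sum>n'\<in>I. x n * cnj (x n') * (\<Sum>m\<in>I. U m n * cnj (U m n')))
             = (\<Sum>n'\<in>I. if n = n' then x n * cnj (x n') else 0)"
      by (intro sum.cong refl) simp
    then show "(\<Sum>n'\<in>I. x n * cnj (x n') * (\<Sum>m\<in>I. U m n * cnj (U m n'))) = x n * cnj (x n)"
      using n \<open>finite I\<close> by simp
  qed
  also have "\<dots> = complex_of_real (\<Sum>n\<in>I. (cmod (x n))\<^sup>2)"
    unfolding of_real_sum complex_norm_square ..
  finally show ?thesis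
    using of_real_eq_iff by blast
qed

lemma Pl_vec_outside:
  "A \<in> Pl_vec l \<Longrightarrow> \<not> (h \<in> comp_range l \<and> j \<in> exp_range l) \<Longrightarrow> A h j = 0"
  unfolding Pl_vec_def by auto

lemma S_op_Pl_vec:
  assumes A: "A \<in> Pl_vec l"
  shows "S_op l A \<in> Pl_vec l"
  unfolding Pl_vec_def mem_Collect_eq
proof (intro allI impI)
  fix h j assume "S_op l A h j \<noteq> 0"
  then have h: "h \<in> comp_range l" and "TA_coeff l A h (2 * j) \<noteq> 0"
    by (auto simp: S_op_def split: if_splits)
  then obtain n where "n \<in> comp_range l" "A n (2 * j - n) \<noteq> 0"
    unfolding TA_coeff_def by (auto elim: sum.not_neutral_contains_not_neutral)
  then have "n \<in> comp_range l" "2 * j - n \<in> exp_range l"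
    using Pl_vec_outside[OF A] by blast+
  with h show "h \<in> comp_range l \<and> - (int l - 1) \<le> j \<and> j \<le> int l - 1"
    by auto
qed

lemma sum_shift_vanishing_outside:
  fixes g :: "int \<Rightarrow> 'a::comm_monoid_add"
  assumes "finite J" "(\<lambda>k. k + n) ` K \<subseteq> J" "\<And>k. k \<notin> K \<Longrightarrow> g k = 0"
  shows "(\<Sum>j\<in>J. g (j - n)) = (\<Sum>k\<in>K. g k)"
proof -
  have "(\<Sum>k\<in>K. g k) = (\<Sum>j\<in>(\<lambda>k. k + n) ` K. g (j - n))"
    by (simp add: sum.reindex inj_on_def)
  also have "\<dots> = (\<Sum>j\<in>J. g (j - n))"
    using assms by (intro sum.mono_neutral_left) force+
  finally show ?thesis ..
qed

definition Pl_norm2 :: "nat \<Rightarrow> (int \<Rightarrow> int \<Rightarrow> complex) \<Rightarrow> real" where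
  "Pl_norm2 l A = (\<Sum>h\<in>comp_range l. \<Sum>j\<in>exp_range l. (cmod (A h j))\<^sup>2)"

definition TA_odd_norm2 :: "nat \<Rightarrow> (int \<Rightarrow> int \<Rightarrow> complex) \<Rightarrow> real" where
  "TA_odd_norm2 l A =
     (\<Sum>h\<in>comp_range l. \<Sum>j\<in>{j \<in> TA_exp_range l. odd j}. (cmod (TA_coeff l A h j))\<^sup>2)"

lemma Pl_norm2_pos:
  assumes A: "A \<in> Pl_vec l" and "A \<noteq> (\<lambda>h j. 0)"
  shows "Pl_norm2 l A > 0"
proof -
  obtain h j where hj: "A h j \<noteq> 0" using assms(2) by blast
  then have h: "h \<in> comp_range l" and j: "j \<in> exp_range l"
    using Pl_vec_outside[OF A] by blast+
  have "(\<Sum>j\<in>exp_range l. (cmod (A h j))\<^sup>2) > 0"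
    using hj by (intro sum_pos2[OF _ j]) auto
  moreover have "(\<Sum>j\<in>exp_range l. (cmod (A h' j))\<^sup>2) \<ge> 0" for h'
    by (simp add: sum_nonneg)
  ultimately show ?thesis
    unfolding Pl_norm2_def by (intro sum_pos2[OF _ h]) simp_all
qed

lemma TA_coeff_norm2:
  assumes A: "A \<in> Pl_vec l"
  shows "(\<Sum>h\<in>comp_range l. \<Sum>j\<in>TA_exp_range l. (cmod (TA_coeff l A h j))\<^sup>2) = Pl_norm2 l A"
proof -
  have "(\<Sum>h\<in>comp_range l. \<Sum>j\<in>TA_exp_range l. (cmod (TA_coeff l A h j))\<^sup>2)
      = (\<Sum>j\<in>TA_exp_range l. \<Sum>h\<in>comp_range l. (cmod (\<Sum>n\<in>comp_range l. tau l h n * A n (j - n)))\<^sup>2)"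
    unfolding TA_coeff_def by (rule sum.swap)
  also have "\<dots> = (\<Sum>j\<in>TA_exp_range l. \<Sum>n\<in>comp_range l. (cmod (A n (j - n)))\<^sup>2)"
    by (intro sum.cong refl sum_norm_square_unitary) (simp_all add: tau_orthonormal)
  also have "\<dots> = (\<Sum>n\<in>comp_range l. \<Sum>j\<in>TA_exp_range l. (cmod (A n (j - n)))\<^sup>2)"
    by (rule sum.swap)
  also have "\<dots> = Pl_norm2 l A"
    unfolding Pl_norm2_def using Pl_vec_outside[OF A]
    by (intro sum.cong refl sum_shift_vanishing_outside) auto
  finally show ?thesis .
qed

lemma even_TA_exps: "{j \<in> TA_exp_range l. even j} = (*) 2 ` exp_range l"
  by (auto elim!: evenE)

lemma Pl_norm2_S_op:
  assumes A: "A \<in> Pl_vec l"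
  shows "Pl_norm2 l A = Pl_norm2 l (S_op l A) + TA_odd_norm2 l A"
proof -
  have "(\<Sum>j\<in>TA_exp_range l. (cmod (TA_coeff l A h j))\<^sup>2)
      = (\<Sum>j\<in>exp_range l. (cmod (S_op l A h j))\<^sup>2)
        + (\<Sum>j\<in>{j \<in> TA_exp_range l. odd j}. (cmod (TA_coeff l A h j))\<^sup>2)"
    if h: "h \<in> comp_range l" for h
  proof -
    have "(\<Sum>j\<in>{j \<in> TA_exp_range l. even j}. (cmod (TA_coeff l A h j))\<^sup>2)
        = (\<Sum>j\<in>exp_range l. (cmod (S_op l A h j))\<^sup>2)"
      unfolding even_TA_exps using h by (simp add: sum.reindex inj_on_def S_op_def)
    moreover have "(\<Sum>j\<in>TA_exp_range l. (cmod (TA_coeff l A h j))\<^sup>2)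
        = (\<Sum>j\<in>{j \<in> TA_exp_range l. even j}. (cmod (TA_coeff l A h j))\<^sup>2)
          + (\<Sum>j\<in>{j \<in> TA_exp_range l. odd j}. (cmod (TA_coeff l A h j))\<^sup>2)"
      using sum.Int_Diff[of "TA_exp_range l" _ "{j. even j}"] by (simp add: Int_def set_diff_eq)
    ultimately show ?thesis
      by simp
  qed
  note even_odd_split = this
  have "Pl_norm2 l A = (\<Sum>h\<in>comp_range l. \<Sum>j\<in>TA_exp_range l. (cmod (TA_coeff l A h j))\<^sup>2)"
    by (simp only: TA_coeff_norm2[OF A])
  also have "\<dots> = (\<Sum>h\<in>comp_range l. (\<Sum>j\<in>exp_range l. (cmod (S_op l A h j))\<^sup>2)
      + (\<Sum>j\<in>{j \<in> TA_exp_range l. odd j}. (cmod (TA_coeff l A h j))\<^sup>2))"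
    by (rule sum.cong[OF refl]) (rule even_odd_split)
  also have "\<dots> = Pl_norm2 l (S_op l A) + TA_odd_norm2 l A"
    unfolding Pl_norm2_def TA_odd_norm2_def by (rule sum.distrib)
  finally show ?thesis .
qed

lemma S_op_eigenvector_norm2:
  assumes A: "A \<in> Pl_vec l" and eig: "S_op l A = (\<lambda>h j. c * A h j)"
  shows "(1 - (cmod c)\<^sup>2) * Pl_norm2 l A = TA_odd_norm2 l A"
proof -
  have "Pl_norm2 l (S_op l A) = (cmod c)\<^sup>2 * Pl_norm2 l A"
    by (simp add: eig Pl_norm2_def norm_mult power_mult_distrib sum_distrib_left)
  then show ?thesis
    using Pl_norm2_S_op[OF A] by (simp add: algebra_simps)
qed

lemma S_op_eigenvalue_norm_le_1:
  assumes A: "A \<in> Pl_vec l" "A \<noteq> (\<lambda>h j. 0)" and eig: "S_op l A = (\<lambda>h j. c * A h j)"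
  shows "cmod c \<le> 1"
proof -
  have "0 \<le> (1 - (cmod c)\<^sup>2) * Pl_norm2 l A"
    unfolding S_op_eigenvector_norm2[OF A(1) eig] TA_odd_norm2_def by (intro sum_nonneg) simp
  then have "(cmod c)\<^sup>2 \<le> 1"
    using Pl_norm2_pos[OF A] by (simp add: zero_le_mult_iff)
  then show ?thesis
    by (simp add: power_le_one_iff abs_square_le_1)
qed

lemma S_op_unimodular_eigenvector_odd_coeffs:
  assumes A: "A \<in> Pl_vec l" and eig: "S_op l A = (\<lambda>h j. c * A h j)" and "cmod c = 1"
    and h: "h \<in> comp_range l" and j: "j \<in> TA_exp_range l" "odd j"
  shows "TA_coeff l A h j = 0"
proof -
  define odd_coeffs where "odd_coeffs = {j \<in> TA_exp_range l. odd j}"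
  have fin: "finite odd_coeffs"
    unfolding odd_coeffs_def by (rule finite_subset[of _ "TA_exp_range l"]) auto
  have "(\<Sum>h\<in>comp_range l. \<Sum>j\<in>odd_coeffs. (cmod (TA_coeff l A h j))\<^sup>2) = 0"
    using S_op_eigenvector_norm2[OF A eig] \<open>cmod c = 1\<close> by (simp add: TA_odd_norm2_def odd_coeffs_def)
  then have "(\<Sum>j\<in>odd_coeffs. (cmod (TA_coeff l A h j))\<^sup>2) = 0"
    using sum_nonneg_0[of "comp_range l" "\<lambda>h. \<Sum>j\<in>odd_coeffs. (cmod (TA_coeff l A h j))\<^sup>2" h] h
    by (simp add: sum_nonneg)
  then have "(cmod (TA_coeff l A h j))\<^sup>2 = 0"
    using sum_nonneg_0[OF fin, of "\<lambda>j. (cmod (TA_coeff l A h j))\<^sup>2" j] j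
    by (simp add: odd_coeffs_def)
  then show ?thesis
    by simp
qed

lemma leval_eq_sum:
  assumes "finite K" "\<And>j. j \<notin> K \<Longrightarrow> f j = 0"
  shows "leval f w = (\<Sum>j\<in>K. f j * w powi j)"
  unfolding leval_def using assms by (intro sum.mono_neutral_left) auto

lemma T_eval_eq_sum_TA_coeff:
  assumes A: "A \<in> Pl_vec l" and "w \<noteq> 0"
  shows "T_eval l A w h = (\<Sum>j\<in>TA_exp_range l. TA_coeff l A h j * w powi j)"
proof -
  have leval: "leval (A n) w = (\<Sum>k\<in>exp_range l. A n k * w powi k)" for n
    by (intro leval_eq_sum) (auto intro: Pl_vec_outside[OF A])
  have "T_eval l A w h = (\<Sum>n\<in>comp_range l. \<Sum>k\<in>exp_range l. tau l h n * A n k * w powi (k + n))"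
    unfolding T_eval_def leval using \<open>w \<noteq> 0\<close>
    by (simp add: sum_distrib_left power_int_add mult_ac)
  also have "\<dots> = (\<Sum>n\<in>comp_range l. \<Sum>j\<in>TA_exp_range l. tau l h n * A n (j - n) * w powi j)"
  proof (rule sum.cong[OF refl])
    fix n assume "n \<in> comp_range l"
    then have "(\<Sum>j\<in>TA_exp_range l. tau l h n * A n (j - n) * w powi (j - n + n))
        = (\<Sum>k\<in>exp_range l. tau l h n * A n k * w powi (k + n))"
      using Pl_vec_outside[OF A] by (intro sum_shift_vanishing_outside) auto
    then show "(\<Sum>k\<in>exp_range l. tau l h n * A n k * w powi (k + n))
        = (\<Sum>j\<in>TA_exp_range l. tau l h n * A n (j - n) * w powi j)"
      by simp
  qed
  also have "\<dots> = (\<Sum>j\<in>TA_exp_range l. TA_coeff l A h j * w powi j)"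
    unfolding TA_coeff_def sum_distrib_right by (rule sum.swap)
  finally show ?thesis .
qed

lemma T_eval_unimodular_eigenvector:
  assumes A: "A \<in> Pl_vec l" and eig: "S_op l A = (\<lambda>h j. c * A h j)" and "cmod c = 1"
    and "w \<noteq> 0" "h \<in> comp_range l"
  shows "T_eval l A w h = c * leval (A h) (w ^ 2)"
proof -
  have "T_eval l A w h = (\<Sum>j\<in>{j \<in> TA_exp_range l. even j}. TA_coeff l A h j * w powi j)"
    unfolding T_eval_eq_sum_TA_coeff[OF A \<open>w \<noteq> 0\<close>]
    using S_op_unimodular_eigenvector_odd_coeffs[OF A eig \<open>cmod c = 1\<close> \<open>h \<in> comp_range l\<close>]
    by (intro sum.mono_neutral_right) auto
  also have "\<dots> = (\<Sum>j\<in>exp_range l. S_op l A h j * (w ^ 2) powi j)"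
    unfolding even_TA_exps using \<open>h \<in> comp_range l\<close>
    by (simp add: sum.reindex inj_on_def S_op_def power_int_power)
  also have "\<dots> = c * leval (A h) (w ^ 2)"
    using Pl_vec_outside[OF A]
    by (subst leval_eq_sum[of "exp_range l"]) (auto simp: eig sum_distrib_left mult.assoc)
  finally show ?thesis .
qed

definition kernel_eigenvalues :: "'x set \<Rightarrow> ('x \<Rightarrow> 'x \<Rightarrow> complex) \<Rightarrow> complex set" where
  "kernel_eigenvalues X M = {c. \<exists>v. (\<forall>x. x \<notin> X \<longrightarrow> v x = 0) \<and> v \<noteq> (\<lambda>x. 0)
                                 \<and> (\<forall>x\<in>X. (\<Sum>y\<in>X. M x y * v y) = c * v x)}"

lemma mat_mult_vec_reindex:
  assumes e: "bij_betw e {0..<n} X" and "i < n"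
  shows "(mat n n (\<lambda>(i, k). M (e i) (e k)) *\<^sub>v vec n (\<lambda>i. v (e i))) $ i = (\<Sum>y\<in>X. M (e i) y * v y)"
  using assms sum.reindex_bij_betw[OF e, of "\<lambda>y. M (e i) y * v y"]
  by (simp add: scalar_prod_def)

lemma kernel_eigenvalues_subset_spectrum:
  assumes e: "bij_betw e {0..<n} X"
  shows "kernel_eigenvalues X M \<subseteq> spectrum (mat n n (\<lambda>(i, k). M (e i) (e k)))"
proof
  fix c assume "c \<in> kernel_eigenvalues X M"
  then obtain v where v: "\<forall>x. x \<notin> X \<longrightarrow> v x = 0" "v \<noteq> (\<lambda>x. 0)"
    "\<forall>x\<in>X. (\<Sum>y\<in>X. M x y * v y) = c * v x"
    unfolding kernel_eigenvalues_def by blast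
  define u where "u = vec n (\<lambda>i. v (e i))"
  obtain x where x: "v x \<noteq> 0" using v(2) by blast
  then have "x \<in> X" using v(1) by blast
  then obtain i where "i < n" "x = e i"
    using bij_betw_imp_surj_on[OF e] by auto
  with x have "u \<noteq> 0\<^sub>v n"
    by (metis u_def index_vec index_zero_vec(1))
  moreover have "mat n n (\<lambda>(i, k). M (e i) (e k)) *\<^sub>v u = c \<cdot>\<^sub>v u"
  proof (rule eq_vecI)
    fix i assume "i < dim_vec (c \<cdot>\<^sub>v u)"
    then have "i < n" by (simp add: u_def)
    then show "(mat n n (\<lambda>(i, k). M (e i) (e k)) *\<^sub>v u) $ i = (c \<cdot>\<^sub>v u) $ i"
      using mat_mult_vec_reindex[OF e, of i M v] v(3) bij_betw_apply[OF e] by (simp add: u_def)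
  qed (simp add: u_def)
  ultimately have "eigenvector (mat n n (\<lambda>(i, k). M (e i) (e k))) u c"
    by (simp add: eigenvector_def u_def)
  then show "c \<in> spectrum (mat n n (\<lambda>(i, k). M (e i) (e k)))"
    by (auto simp: spectrum_def eigenvalue_def)
qed

lemma spectrum_subset_kernel_eigenvalues:
  assumes e: "bij_betw e {0..<n} X"
  shows "spectrum (mat n n (\<lambda>(i, k). M (e i) (e k))) \<subseteq> kernel_eigenvalues X M"
proof
  fix c assume "c \<in> spectrum (mat n n (\<lambda>(i, k). M (e i) (e k)))"
  then obtain u where u: "u \<in> carrier_vec n" "u \<noteq> 0\<^sub>v n"
    "mat n n (\<lambda>(i, k). M (e i) (e k)) *\<^sub>v u = c \<cdot>\<^sub>v u"
    by (auto simp: spectrum_def eigenvalue_def eigenvector_def)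
  define v where "v x = (if x \<in> X then u $ inv_into {0..<n} e x else 0)" for x
  have v_e: "v (e i) = u $ i" if "i < n" for i
    using that e by (simp add: v_def bij_betw_apply bij_betw_inv_into_left)
  have u_eq: "u = vec n (\<lambda>i. v (e i))"
    using u(1) by (auto simp: v_e)
  have "v \<noteq> (\<lambda>x. 0)"
    using u(1,2) v_e by (metis eq_vecI carrier_vecD index_zero_vec)
  moreover have "(\<Sum>y\<in>X. M x y * v y) = c * v x" if "x \<in> X" for x
  proof -
    obtain i where "i < n" "x = e i"
      using bij_betw_imp_surj_on[OF e] \<open>x \<in> X\<close> by auto
    then show ?thesis
      using mat_mult_vec_reindex[OF e, of i M v, folded u_eq] u by (simp add: v_e)
  qed
  moreover have "\<forall>x. x \<notin> X \<longrightarrow> v x = 0"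
    by (simp add: v_def)
  ultimately show "c \<in> kernel_eigenvalues X M"
    unfolding kernel_eigenvalues_def by blast
qed

lemma kernel_eigenvalues_finite_nonempty:
  assumes "finite X" "X \<noteq> {}"
  shows "finite (kernel_eigenvalues X M)" "kernel_eigenvalues X M \<noteq> {}"
proof -
  obtain e where e: "bij_betw e {0..<card X} X"
    using ex_bij_betw_nat_finite[OF \<open>finite X\<close>] by blast
  let ?K = "mat (card X) (card X) (\<lambda>(i, k). M (e i) (e k))"
  have "kernel_eigenvalues X M = spectrum ?K"
    using kernel_eigenvalues_subset_spectrum[OF e] spectrum_subset_kernel_eigenvalues[OF e] by blast
  moreover have "?K \<in> carrier_mat (card X) (card X)" "card X > 0"
    using assms by (simp_all add: card_gt_0_iff)
  ultimately show "finite (kernel_eigenvalues X M)" "kernel_eigenvalues X M \<noteq> {}"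
    using card_finite_spectrum(1) spectrum_non_empty by metis+
qed

definition S_kernel :: "nat \<Rightarrow> int \<times> int \<Rightarrow> int \<times> int \<Rightarrow> complex" where
  "S_kernel l = (\<lambda>(h, j) (n, k). if k = 2 * j - n then tau l h n else 0)"

lemma S_op_eq_kernel_sum:
  assumes A: "A \<in> Pl_vec l" and "h \<in> comp_range l"
  shows "S_op l A h j = (\<Sum>(n, k)\<in>comp_range l \<times> exp_range l. S_kernel l (h, j) (n, k) * A n k)"
proof -
  have "(\<Sum>k\<in>exp_range l. S_kernel l (h, j) (n, k) * A n k) = tau l h n * A n (2 * j - n)" for n
    using Pl_vec_outside[OF A, of n "2 * j - n"]
    by (auto simp: S_kernel_def if_distrib[of "\<lambda>t. t * _"] sum.delta' cong: if_cong)
  then show ?thesis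
    using \<open>h \<in> comp_range l\<close> by (simp add: sum.cartesian_product[symmetric] S_op_def TA_coeff_def)
qed

lemma S_eigenvalues_subset_kernel_eigenvalues:
  "S_eigenvalues l \<subseteq> kernel_eigenvalues (comp_range l \<times> exp_range l) (S_kernel l)"
proof
  fix c assume "c \<in> S_eigenvalues l"
  then obtain A where A: "A \<in> Pl_vec l" "A \<noteq> (\<lambda>h j. 0)" "S_op l A = (\<lambda>h j. c * A h j)"
    unfolding S_eigenvalues_def by blast
  have "\<forall>x. x \<notin> comp_range l \<times> exp_range l \<longrightarrow> case_prod A x = 0"
    using Pl_vec_outside[OF A(1)] by auto
  moreover have "case_prod A \<noteq> (\<lambda>x. 0)"
    using A(2) by (auto simp: fun_eq_iff)
  moreover have "\<forall>x\<in>comp_range l \<times> exp_range l.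
      (\<Sum>y\<in>comp_range l \<times> exp_range l. S_kernel l x y * case_prod A y) = c * case_prod A x"
    using S_op_eq_kernel_sum[OF A(1)] A(3) by (auto simp: case_prod_beta' fun_eq_iff)
  ultimately show "c \<in> kernel_eigenvalues (comp_range l \<times> exp_range l) (S_kernel l)"
    unfolding kernel_eigenvalues_def by blast
qed

lemma kernel_eigenvalues_subset_S_eigenvalues:
  "kernel_eigenvalues (comp_range l \<times> exp_range l) (S_kernel l) \<subseteq> S_eigenvalues l"
proof
  fix c assume "c \<in> kernel_eigenvalues (comp_range l \<times> exp_range l) (S_kernel l)"
  then obtain v where v: "\<forall>x. x \<notin> comp_range l \<times> exp_range l \<longrightarrow> v x = 0" "v \<noteq> (\<lambda>x. 0)"
    "\<forall>x\<in>comp_range l \<times> exp_range l.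
       (\<Sum>y\<in>comp_range l \<times> exp_range l. S_kernel l x y * v y) = c * v x"
    unfolding kernel_eigenvalues_def by blast
  have A: "curry v \<in> Pl_vec l"
    using v(1) by (auto simp: Pl_vec_def)
  moreover have "curry v \<noteq> (\<lambda>h j. 0)"
    using v(2) by (auto simp: fun_eq_iff)
  moreover have "S_op l (curry v) h j = c * curry v h j" for h j
  proof (cases "(h, j) \<in> comp_range l \<times> exp_range l")
    case True
    then show ?thesis
      using S_op_eq_kernel_sum[OF A, of h j] v(3) by (auto simp: case_prod_beta')
  next
    case False
    then show ?thesis
      using Pl_vec_outside[OF S_op_Pl_vec[OF A]] Pl_vec_outside[OF A] by auto
  qed
  ultimately show "c \<in> S_eigenvalues l"
    unfolding S_eigenvalues_def by blast
qed

lemma S_eigenvalues_finite_nonempty: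
  assumes "l \<ge> 1"
  shows "finite (S_eigenvalues l)" "S_eigenvalues l \<noteq> {}"
proof -
  have "S_eigenvalues l = kernel_eigenvalues (comp_range l \<times> exp_range l) (S_kernel l)"
    using S_eigenvalues_subset_kernel_eigenvalues kernel_eigenvalues_subset_S_eigenvalues by blast
  moreover have "(0, 0) \<in> comp_range l \<times> exp_range l"
    using assms by simp
  ultimately show "finite (S_eigenvalues l)" "S_eigenvalues l \<noteq> {}"
    using kernel_eigenvalues_finite_nonempty[of "comp_range l \<times> exp_range l" "S_kernel l"] by auto
qed

theorem mainTheorem11:
  fixes l :: nat
  assumes "l \<ge> 1"
  shows "(\<forall>A\<in>Pl_vec l. S_op l A \<in> Pl_vec l)
       \<and> rho_S l \<le> 1
       \<and> (rho_S l = 1 \<longrightarrow>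
            (\<exists>c A. cmod c = 1 \<and> A \<in> Pl_vec l \<and> A \<noteq> (\<lambda>h j. 0) \<and>
               (\<forall>w. w \<noteq> 0 \<longrightarrow>
                  (\<forall>h\<in>{-int l..int l}. T_eval l A w h = c * leval (A h) (w ^ 2)))))"
proof -
  note fin = S_eigenvalues_finite_nonempty[OF assms]
  have rho_eq_Max: "rho_S l = Max (cmod ` S_eigenvalues l)"
    unfolding rho_S_def using fin by (simp add: cSup_eq_Max)
  have "rho_S l \<le> 1"
    unfolding rho_eq_Max using fin
    by (auto simp: S_eigenvalues_def intro: S_op_eigenvalue_norm_le_1)
  moreover have "\<exists>c A. cmod c = 1 \<and> A \<in> Pl_vec l \<and> A \<noteq> (\<lambda>h j. 0) \<and>
      (\<forall>w. w \<noteq> 0 \<longrightarrow> (\<forall>h\<in>{-int l..int l}. T_eval l A w h = c * leval (A h) (w ^ 2)))"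
    if "rho_S l = 1"
  proof -
    obtain c where c: "c \<in> S_eigenvalues l" "cmod c = 1"
      using Max_in[of "cmod ` S_eigenvalues l"] fin \<open>rho_S l = 1\<close> unfolding rho_eq_Max by auto
    then obtain A where A: "A \<in> Pl_vec l" "A \<noteq> (\<lambda>h j. 0)" "S_op l A = (\<lambda>h j. c * A h j)"
      unfolding S_eigenvalues_def by blast
    then show ?thesis
      using T_eval_unimodular_eigenvector[OF A(1,3) c(2)] c(2) by blast
  qed
  ultimately show ?thesis
    using S_op_Pl_vec by blast
qed

end
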